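(* Let $r\in\mathbb{N}$. 1) Let $(v_n)_{n\ge1}$ be a sequence of vertices of $\mathbb{YF}^r$, let $v\in\mathbb{YF}^{r,+}_\infty$ and $\beta\in(0,1]$ be such that $v_n\to v$ letterwise and $\pi(v_n)\to\beta\cdot\pi(v)$ as $n\to\infty$. Then for every $w\in\mathbb{YF}^r$ the limit $$\mu_{\{v_n\}}(w)=\lim_{n\to\infty} d_r(\varepsilon,w)\,\frac{d_r(w,v_n)}{d_r(\varepsilon,v_n)}$$ exists. Moreover, its value depends only on $w$, $v$ and $\beta$: any two sequences satisfying these hypotheses with the same $v$ and $\beta$ give the same limit. 2) Let $(v_n)_{n\ge1}$ be a sequence of vertices of $\mathbb{YF}^r$ and let $v\in\mathbb{YF}^r_\infty$ be such that $v_n\to v$ letterwise and $\pi(v_n)\to 0$. Then for every $w\in\mathbb{YF}^r$ the limit exists and $$\lim_{n\to\infty} d_r(\varepsilon,w)\,\frac{d_r(w,v_n)}{d_r(\varepsilon,v_n)}=\frac{d_1(\varepsilon,s(w))^2}{|w|!\cdot r^{e(w)}}.$$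
   Context: Fix $r\in\mathbb{N}=\{1,2,\dots\}$. Words and statistics. Consider finite words over the $(r+1)$-letter alphabet $\{1_1,\dots,1_r,2\}$. A letter $1_i$ is called a one and has digit value $1$; the letter $2$ is a two and has digit value $2$. Words are written left to right, and $\varepsilon$ is the empty word. For a word $x$: - $|x|$ is the sum of the digit values, - $\#x$ is the number of letters, - $e(x)$ is the number of ones, - $d(x)$ is the number of twos. The graph $\mathbb{YF}^r$. It is the graded graph whose vertices are all such finite words, graded by $|\cdot|$. From a word $x$ there is a downward edge to every word obtained from $x$ by one of two operations: (i) delete the leftmost one of $x$; (ii) replace a letter $2$ lying to the left of the leftmost one of $x$ (any $2$ if $x$ has no ones) by a letter $1_i$, with arbitrary $i\in\{1,\dots,r\}$. For $r=1$ we write $1$ for $1_1$; $\mathbb{YF}:=\mathbb{YF}^1$ is the Young–Fibonacci graph. For $x\in\mathbb{YF}^r$, $s(x)\in\mathbb{YF}$ is obtained by replacing every $1_i$ by $1$. Path counts. For vertices $x,y$, $d_r(x,y)$ is the number of downward paths $y=y_n\to y_{n-1}\to\dots\to y_m=x$ along edges of $\mathbb{YF}^r$ with $|y_i|=i$. In particular $d_r(x,x)=1$, and $d_r(x,y)=0$ if there is no such path. $d_1$ denotes the same count in $\mathbb{YF}$. Infinite words. $\mathbb{YF}^r_\infty$ is the set of left-infinite words $\dots\alpha_2\alpha_1$ over the same alphabet. The function $g$. For a finite or infinite word $x$, write $x=\dots 2\,1^{\beta_m}\,2\cdots 2\,1^{\beta_1}\,2\,1^{\beta_0}$, where $1^{\beta}$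 is a possibly empty block of $\beta$ consecutive ones with arbitrary indices. For $1\le j\le d(x)$ set $g(x,j)=\beta_0+\dots+\beta_{j-1}+2j-1$. The function $\pi$. Set $\pi(x)=\prod_{j:\,g(x,j)>1}\frac{g(x,j)-1}{g(x,j)}$; for infinite $x$ this is an infinite product with value in $[0,1]$. Let $\mathbb{YF}^{r,+}_\infty=\{v\in\mathbb{YF}^r_\infty:\pi(v)>0\}$. Letterwise convergence. A sequence of finite words $v_n$ converges letterwise to $v=\dots\alpha_2\alpha_1\in\mathbb{YF}^r_\infty$ if for every $k$ and all sufficiently large $n$, $v_n$ has at least $k$ letters and its last $k$ letters are $\alpha_k\dots\alpha_1$. *)

theory Defs
  imports Complex_Main
begin

text \<open>Letters: One i stands for the one 1_i (only 1 \<le> i \<le> r is allowed), Two for the letter 2.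
  Finite words are lists written left to right.\<close>
datatype letter = One nat | Two

type_synonym word = "letter list"

definition letter_ok :: "nat \<Rightarrow> letter \<Rightarrow> bool" where
  "letter_ok r l = (case l of One i \<Rightarrow> 1 \<le> i \<and> i \<le> r | Two \<Rightarrow> True)"

definition vertex :: "nat \<Rightarrow> word \<Rightarrow> bool" where
  "vertex r x = (\<forall>l\<in>set x. letter_ok r l)"

definition digit :: "letter \<Rightarrow> nat" where
  "digit l = (case l of One _ \<Rightarrow> 1 | Two \<Rightarrow> 2)"

definition wt :: "word \<Rightarrow> nat" where
  "wt x = sum_list (map digit x)"

definition ones :: "word \<Rightarrow> nat" where
  "ones x = length (filter (\<lambda>l. l \<noteq> Two) x)"

definition sfun :: "word \<Rightarrow> word" where
  "sfun x = map (\<lambda>l. case l of One _ \<Rightarrow> One 1 | Two \<Rightarrow> Two) x"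

text \<open>Position of the leftmost one (= length x if there is no one).\<close>
definition lpos :: "word \<Rightarrow> nat" where
  "lpos x = length (takeWhile (\<lambda>l. l = Two) x)"

text \<open>Downward edge from x to z in YF^r: (i) delete the leftmost one; (ii) replace a 2 to the
  left of the leftmost one (any 2 if there are no ones) by some 1_i with 1 \<le> i \<le> r.\<close>
definition edge :: "nat \<Rightarrow> word \<Rightarrow> word \<Rightarrow> bool" where
  "edge r x z =
     ((lpos x < length x \<and> z = take (lpos x) x @ drop (Suc (lpos x)) x)
      \<or> (\<exists>j < lpos x. \<exists>i. 1 \<le> i \<and> i \<le> r \<and> z = x[j := One i]))"

definition dpaths :: "nat \<Rightarrow> word \<Rightarrow> word \<Rightarrow> word list set" where
  "dpaths r x y = {ps. ps \<noteq> [] \<and> hd ps = y \<and> last ps = x \<and>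
      (\<forall>i. Suc i < length ps \<longrightarrow> edge r (ps ! i) (ps ! Suc i))}"

text \<open>d_r(x,y): number of downward paths from y to x.\<close>
definition dcount :: "nat \<Rightarrow> word \<Rightarrow> word \<Rightarrow> nat" where
  "dcount r x y = card (dpaths r x y)"

text \<open>Infinite words ...\<alpha>_2 \<alpha>_1 are functions; a k = \<alpha>_(k+1), i.e. position k counted from
  the right starting at 0.\<close>
type_synonym iword = "nat \<Rightarrow> letter"

definition ivertex :: "nat \<Rightarrow> iword \<Rightarrow> bool" where
  "ivertex r a = (\<forall>k. letter_ok r (a k))"

definition rix :: "word \<Rightarrow> iword" where
  "rix x = (\<lambda>k. if k < length x then rev x ! k else Two)"

text \<open>If position k holds the j-th two from the right, then
  g(x,j) = \<beta>_0 + ... + \<beta>_(j-1) + 2j - 1 = (sum of digits at positions 0..k) - 1.\<close>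
definition gval :: "iword \<Rightarrow> nat \<Rightarrow> nat" where
  "gval a k = (\<Sum>m\<le>k. digit (a m)) - 1"

definition pfac :: "iword \<Rightarrow> nat \<Rightarrow> real" where
  "pfac a k = (if a k = Two \<and> gval a k > 1
               then (real (gval a k) - 1) / real (gval a k) else 1)"

definition pi_fin :: "word \<Rightarrow> real" where
  "pi_fin x = (\<Prod>k<length x. pfac (rix x) k)"

text \<open>Infinite product, as the limit of the (non-increasing, nonnegative) partial products.\<close>
definition pi_inf :: "iword \<Rightarrow> real" where
  "pi_inf a = lim (\<lambda>N. \<Prod>k<N. pfac a k)"

definition letterwise :: "(nat \<Rightarrow> word) \<Rightarrow> iword \<Rightarrow> bool" where
  "letterwise vs a = (\<forall>k. \<forall>\<^sub>F n in sequentially.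
      k \<le> length (vs n) \<and> (\<forall>m<k. rev (vs n) ! m = a m))"

definition ratio :: "nat \<Rightarrow> word \<Rightarrow> word \<Rightarrow> real" where
  "ratio r w v = real (dcount r [] w) * real (dcount r w v) / real (dcount r [] v)"

end

theory Submission
  imports Defs
begin

text \<open>
  Splitting a path from 2u at its first step gives d(w,2u) = r(|u|+1-|w|) d(w,u) + d(tl w,u)
  for w \<noteq> \<epsilon>, while d(w,1u) = d(w,u) for |w| \<le> |u|. So prepending a letter to x acts on
  w \<mapsto> d(\<epsilon>,w) d(w,x) / d(\<epsilon>,x) by an operator that is triangular with respect to
  w \<mapsto> tl w: the identity for a 1, and for a 2 an operator with eigenvalues 1 - k/(|x|+1),
  k = 0, ..., |w|. Expanding the ratio at a fixed suffix t into eigencomponents E_k gives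
  ratio(w, q t) = \<Sum>_k P_k(q) E_k(w), where P_k(q) is the product of 1 - k/(n+1) over the twos of q
  (n the weight to the right of the two). P_1 is a tail of the product \<pi>, and P_k is within
  k^2/N of P_1^k once all twos lie beyond position N; hence P_k along v_n has a limit
  determined by v and lim \<pi>(v_n). If \<pi>(v_n) \<rightarrow> 0 only E_0 survives, and E_0 is computed from
  its recursion |w| E_0(w) = \<kappa>(w) E_0(tl w).
\<close>

section \<open>Path counts\<close>

lemma wt_simps [simp]: "wt [] = 0" "wt (One i # u) = Suc (wt u)" "wt (Two # u) = Suc (Suc (wt u))"
  by (simp_all add: wt_def digit_def)

lemma lpos_simps [simp]: "lpos [] = 0" "lpos (One i # u) = 0" "lpos (Two # u) = Suc (lpos u)"
  by (simp_all add: lpos_def)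

lemma vertex_simps [simp]: "vertex r []" "vertex r (a # w) \<longleftrightarrow> letter_ok r a \<and> vertex r w"
  by (simp_all add: vertex_def)

lemma letter_ok_simps [simp]: "letter_ok r Two" "letter_ok r (One i) \<longleftrightarrow> 1 \<le> i \<and> i \<le> r"
  by (simp_all add: letter_ok_def)

fun lower_covers :: "nat \<Rightarrow> word \<Rightarrow> word set" where
  "lower_covers r [] = {}"
| "lower_covers r (One i # u) = {u}"
| "lower_covers r (Two # u) = (\<lambda>i. One i # u) ` {1..r} \<union> Cons Two ` lower_covers r u"

lemma edge_iff_lower_covers: "edge r x y \<longleftrightarrow> y \<in> lower_covers r x"
proof (induction x arbitrary: y)
  case (Cons a u)
  show ?case
  proof (cases a)
    case Two
    have "edge r (Two # u) y \<longleftrightarrow> (\<exists>i\<in>{1..r}. y = One i # u) \<or> (\<exists>y'. y = Two # y' \<and> edge r u y')"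
      unfolding edge_def by (simp add: Ex_less_Suc2) auto
    with Cons.IH Two show ?thesis by auto
  qed (simp add: edge_def)
qed (simp add: edge_def)

lemma wt_lower_covers: "y \<in> lower_covers r x \<Longrightarrow> wt x = Suc (wt y)"
  by (induction r x arbitrary: y rule: lower_covers.induct) auto

lemma finite_lower_covers [simp]: "finite (lower_covers r x)"
  by (induction r x rule: lower_covers.induct) auto

lemma sum_lower_covers_Two:
  "(\<Sum>y\<in>lower_covers r (Two # u). f y) = (\<Sum>i=1..r. f (One i # u)) + (\<Sum>y\<in>lower_covers r u. f (Two # y))"
proof -
  have "(\<lambda>i. One i # u) ` {1..r} \<inter> Cons Two ` lower_covers r u = {}" by auto
  then show ?thesis by (simp add: sum.union_disjoint sum.reindex inj_on_def)
qed

lemma Cons_mem_dpaths_iff: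
  "x # ps \<in> dpaths r w y \<longleftrightarrow>
     x = y \<and> (if ps = [] then x = w else edge r x (hd ps) \<and> ps \<in> dpaths r w (hd ps))"
  unfolding dpaths_def by (cases ps) (auto simp: All_less_Suc2)

lemma dpaths_hd: "ps \<in> dpaths r w x \<Longrightarrow> ps \<noteq> [] \<and> hd ps = x"
  by (simp add: dpaths_def)

lemma dpaths_rec:
  "dpaths r w x = (if w = x then {[x]} else {}) \<union> (\<Union>y\<in>lower_covers r x. Cons x ` dpaths r w y)"
proof (intro set_eqI)
  fix ps
  show "ps \<in> dpaths r w x \<longleftrightarrow> ps \<in> (if w = x then {[x]} else {}) \<union> (\<Union>y\<in>lower_covers r x. Cons x ` dpaths r w y)"
  proof (cases ps)
    case (Cons x' ps')
    then show ?thesis using dpaths_hd[of ps' r w]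
      by (auto simp: Cons_mem_dpaths_iff edge_iff_lower_covers)
  qed (auto simp: dpaths_def)
qed

lemma finite_dpaths: "finite (dpaths r w x)"
proof (induction "wt x" arbitrary: x rule: less_induct)
  case less
  have "finite (dpaths r w y)" if "y \<in> lower_covers r x" for y
    using less wt_lower_covers[OF that] by simp
  then show ?case by (subst dpaths_rec) simp
qed

lemma dcount_rec: "dcount r w x = of_bool (w = x) + (\<Sum>y\<in>lower_covers r x. dcount r w y)"
proof -
  have disj: "Cons x ` dpaths r w y \<inter> Cons x ` dpaths r w y' = {}" if "y \<noteq> y'" for y y'
    using that dpaths_hd[of _ r w y] dpaths_hd[of _ r w y'] by blast
  have "[x] \<notin> Cons x ` dpaths r w y" for y
    using dpaths_hd[of "[]" r w y] by blast
  then have "card (dpaths r w x) =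
      card (if w = x then {[x]} else {}) + card (\<Union>y\<in>lower_covers r x. Cons x ` dpaths r w y)"
    by (subst dpaths_rec, intro card_Un_disjoint) (auto simp: finite_dpaths)
  also have "card (\<Union>y\<in>lower_covers r x. Cons x ` dpaths r w y) = (\<Sum>y\<in>lower_covers r x. dcount r w y)"
    using disj by (subst card_UN_disjoint) (auto simp: finite_dpaths card_image dcount_def)
  finally show ?thesis by (simp add: dcount_def)
qed

lemma dcount_Cons_One: "dcount r w (One i # u) = of_bool (w = One i # u) + dcount r w u"
  by (subst dcount_rec) simp

lemma sum_dcount_Cons_One:
  assumes "vertex r w"
  shows "(\<Sum>i=1..r. real (dcount r w (One i # u))) =
    of_bool (w \<noteq> [] \<and> hd w \<noteq> Two \<and> tl w = u) + real r * real (dcount r w u)"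
proof -
  have "(\<Sum>i=1..r. of_bool (w = One i # u) :: real) = of_bool (w \<noteq> [] \<and> hd w \<noteq> Two \<and> tl w = u)"
  proof (cases w)
    case (Cons a w')
    then show ?thesis using assms by (cases a) (auto simp: of_bool_def sum.delta)
  qed simp
  then show ?thesis by (simp add: dcount_Cons_One sum.distrib)
qed

lemma dcount_Cons_Two:
  assumes "vertex r w"
  shows "real (dcount r w (Two # u)) =
    real r * (real (wt u) + 1 - real (wt w)) * real (dcount r w u) + of_bool (w \<noteq> []) * real (dcount r (tl w) u)"
proof (induction "wt u" arbitrary: u rule: less_induct)
  case less
  let ?d = "\<lambda>x. real (dcount r w x)" and ?c = "\<lambda>x. of_bool (w \<noteq> []) * real (dcount r (tl w) x)"
  have rec: "real (dcount r v x) = of_bool (v = x) + (\<Sum>y\<in>lower_covers r x. real (dcount r v y))" for v x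
    by (subst dcount_rec) simp
  have IH: "?d (Two # y) = real r * (real (wt u) - real (wt w)) * ?d y + ?c y" if "y \<in> lower_covers r u" for y
    using less[of y] wt_lower_covers[OF that] by simp
  have "?d (Two # u) = of_bool (w = Two # u) + (\<Sum>i=1..r. ?d (One i # u)) + (\<Sum>y\<in>lower_covers r u. ?d (Two # y))"
    by (subst rec) (simp only: sum_lower_covers_Two add.assoc)
  also have "\<dots> = of_bool (w = Two # u) + of_bool (w \<noteq> [] \<and> hd w \<noteq> Two \<and> tl w = u) + real r * ?d u
      + real r * (real (wt u) - real (wt w)) * (\<Sum>y\<in>lower_covers r u. ?d y) + (\<Sum>y\<in>lower_covers r u. ?c y)"
    unfolding sum_dcount_Cons_One[OF assms] by (simp add: IH sum.distrib sum_distrib_left)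
  also have "\<dots> = of_bool (w = Two # u) + of_bool (w \<noteq> [] \<and> hd w \<noteq> Two \<and> tl w = u) + real r * ?d u
      + real r * (real (wt u) - real (wt w)) * (?d u - of_bool (w = u)) + ?c u - of_bool (w \<noteq> [] \<and> tl w = u)"
    by (simp add: rec[of w u] rec[of "tl w" u] sum_distrib_left[symmetric] algebra_simps)
  also have "\<dots> = real r * (real (wt u) + 1 - real (wt w)) * ?d u + ?c u"
    by (cases w) (auto simp: algebra_simps)
  finally show ?case .
qed

lemma dcount_Nil_Cons_One [simp]: "dcount r [] (One i # u) = dcount r [] u"
  by (simp add: dcount_Cons_One)

lemma dcount_Nil_Cons_Two: "real (dcount r [] (Two # u)) = real r * (real (wt u) + 1) * real (dcount r [] u)"
  using dcount_Cons_Two[of r "[]" u] by simp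

lemma dcount_Nil_Nil [simp]: "dcount r [] [] = 1"
  by (subst dcount_rec) simp

lemma dcount_Nil_pos: "1 \<le> r \<Longrightarrow> 0 < dcount r [] x"
proof (induction x)
  case (Cons a x)
  have "0 < real (dcount r [] (Two # x))" using Cons by (simp add: dcount_Nil_Cons_Two)
  then show ?case using Cons by (cases a) auto
qed simp

fun kappa :: "nat \<Rightarrow> word \<Rightarrow> real" where
  "kappa r [] = 0"
| "kappa r (One i # u) = 1 / real r"
| "kappa r (Two # u) = real (wt u) + 1"

lemma dcount_Nil_eq_kappa:
  assumes "1 \<le> r"
  shows "of_bool (w \<noteq> []) * real (dcount r [] w) = real r * kappa r w * real (dcount r [] (tl w))"
proof (cases w)
  case (Cons a u)
  then show ?thesis using assms by (cases a) (auto simp: dcount_Nil_Cons_Two)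
qed simp

lemma ratio_Cons_One: "wt w \<le> wt u \<Longrightarrow> ratio r w (One i # u) = ratio r w u"
  by (auto simp: ratio_def dcount_Cons_One)

lemma ratio_Cons_Two:
  assumes "1 \<le> r" and "vertex r w"
  shows "ratio r w (Two # u) =
    ratio r w u + (kappa r w * ratio r (tl w) u - real (wt w) * ratio r w u) / (real (wt u) + 1)"
proof -
  have "D * (R * (N - W) * d + c * d') / (R * N * Du) = D * d / Du + (k * (Dt * d' / Du) - W * (D * d / Du)) / N"
    if "c * D = R * k * Dt" "0 < R" "0 < N" "0 < Du" for D R N W d c d' Du k Dt :: real
    using that by (simp add: field_simps)
  moreover have "0 < real (dcount r [] u)" using dcount_Nil_pos[OF assms(1)] by simp
  ultimately show ?thesis using assms(1) dcount_Nil_eq_kappa[OF assms(1), of w]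
    unfolding ratio_def dcount_Nil_Cons_Two dcount_Cons_Two[OF assms(2)] by simp
qed

section \<open>Eigencomponents of the ratio\<close>

text \<open>
  The components of f along the eigenfunctions of g \<mapsto> (\<lambda>w. \<kappa> w * g (tl w) - |w| * g w),
  which is triangular with eigenvalue -k on the k-th component; the top
  component k = |w| is whatever remains of f w.
\<close>
primrec eigen_part :: "(word \<Rightarrow> real) \<Rightarrow> (word \<Rightarrow> real) \<Rightarrow> word \<Rightarrow> nat \<Rightarrow> real" where
  "eigen_part f \<kappa> [] k = (if k = 0 then f [] else 0)"
| "eigen_part f \<kappa> (a # z) k =
     (if k < wt (a # z) then \<kappa> (a # z) * eigen_part f \<kappa> z k / (real (wt (a # z)) - real k)
      else if k = wt (a # z)
      then f (a # z) - (\<Sum>j<wt (a # z). \<kappa> (a # z) * eigen_part f \<kappa> z j / (real (wt (a # z)) - real j))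
      else 0)"

lemma eigen_part_eq_0: "wt w < k \<Longrightarrow> eigen_part f \<kappa> w k = 0"
  by (cases w) auto

lemma sum_eigen_part:
  assumes "wt w \<le> M"
  shows "(\<Sum>k\<le>M. eigen_part f \<kappa> w k) = f w"
proof -
  have "(\<Sum>k\<le>M. eigen_part f \<kappa> w k) = (\<Sum>k\<le>wt w. eigen_part f \<kappa> w k)"
    using assms by (intro sum.mono_neutral_right) (auto simp: eigen_part_eq_0)
  also have "\<dots> = f w"
  proof (cases w)
    case (Cons a z)
    then obtain n where n: "wt w = Suc n" by (cases a) auto
    have "(\<Sum>k<wt w. eigen_part f \<kappa> w k) = (\<Sum>j<wt w. \<kappa> w * eigen_part f \<kappa> z j / (real (wt w) - real j))"
      using Cons by (intro sum.cong) auto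
    then show ?thesis using Cons by (simp add: n lessThan_Suc_atMost[symmetric])
  qed simp
  finally show ?thesis .
qed

lemma eigen_part_tl:
  assumes "\<kappa> [] = 0"
  shows "\<kappa> w * eigen_part f \<kappa> (tl w) k = (real (wt w) - real k) * eigen_part f \<kappa> w k"
proof (cases w)
  case (Cons a z)
  have "wt z < wt w" using Cons by (cases a) auto
  then show ?thesis using Cons eigen_part_eq_0[of z k] by auto
qed (simp add: assms)

lemma eigen_part_0_eq:
  assumes "g [] = f []" and "\<And>w. w \<noteq> [] \<Longrightarrow> real (wt w) * g w = \<kappa> w * g (tl w)"
  shows "eigen_part f \<kappa> w 0 = g w"
proof (induction w)
  case (Cons a z)
  have "0 < wt (a # z)" by (cases a) auto
  then show ?case using Cons assms(2)[of "a # z"] by (simp add: field_simps)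
qed (simp add: assms(1))

text \<open>
  Prepending a 2 to a word of weight n multiplies the k-th eigencomponent by 1 - k/(n+1);
  for k = 1 this is the factor of \<pi> at that position.
\<close>
definition pi_factor :: "nat \<Rightarrow> iword \<Rightarrow> nat \<Rightarrow> real" where
  "pi_factor k a j = (if a j = Two then 1 - real k / (real (\<Sum>m<j. digit (a m)) + 1) else 1)"

definition pi_prod :: "nat \<Rightarrow> iword \<Rightarrow> nat \<Rightarrow> nat \<Rightarrow> real" where
  "pi_prod k a lo hi = (\<Prod>j\<in>{lo..<hi}. pi_factor k a j)"

lemma pi_factor_cong: "(\<And>m. m \<le> j \<Longrightarrow> a m = b m) \<Longrightarrow> pi_factor k a j = pi_factor k b j"
  unfolding pi_factor_def by (metis (no_types, lifting) lessThan_iff less_imp_le order_refl sum.cong)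

lemma pi_prod_cong: "(\<And>m. m < hi \<Longrightarrow> a m = b m) \<Longrightarrow> pi_prod k a lo hi = pi_prod k b lo hi"
  unfolding pi_prod_def by (intro prod.cong refl pi_factor_cong) auto

lemma pi_prod_split: "lo \<le> m \<Longrightarrow> m \<le> hi \<Longrightarrow> pi_prod k a lo hi = pi_prod k a lo m * pi_prod k a m hi"
  unfolding pi_prod_def by (simp add: prod.atLeastLessThan_concat)

lemma pi_prod_0 [simp]: "pi_prod 0 a lo hi = 1"
  unfolding pi_prod_def pi_factor_def by (rule prod.neutral) simp

lemma rix_Cons: "rix (b # y) j = (if j < length y then rix y j else if j = length y then b else Two)"
  by (auto simp: rix_def nth_append)

lemma sum_digit_rix: "(\<Sum>m<length y. digit (rix y m)) = wt y"
proof (induction y)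
  case (Cons b y)
  have "(\<Sum>m<length y. digit (rix (b # y) m)) = (\<Sum>m<length y. digit (rix y m))"
    by (intro sum.cong) (auto simp: rix_Cons)
  then show ?case using Cons by (simp add: rix_Cons wt_def)
qed (simp add: wt_def)

lemma pi_prod_Cons:
  assumes "lo \<le> length y"
  shows "pi_prod k (rix (b # y)) lo (length (b # y)) =
    pi_prod k (rix y) lo (length y) * (if b = Two then 1 - real k / (real (wt y) + 1) else 1)"
proof -
  have "pi_prod k (rix (b # y)) lo (length y) = pi_prod k (rix y) lo (length y)"
    by (rule pi_prod_cong) (simp add: rix_Cons)
  moreover have "(\<Sum>m<length y. digit (rix (b # y) m)) = wt y"
    by (subst sum_digit_rix[symmetric], intro sum.cong) (auto simp: rix_Cons)
  ultimately show ?thesis using assms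
    by (simp add: pi_prod_def prod.atLeastLessThan_Suc pi_factor_def rix_Cons)
qed

lemma ratio_append:
  assumes "1 \<le> r" and "vertex r w" and "wt w \<le> wt t"
  shows "ratio r w (q @ t) =
    (\<Sum>k\<le>wt t. pi_prod k (rix (q @ t)) (length t) (length (q @ t)) * eigen_part (\<lambda>x. ratio r x t) (kappa r) w k)"
  using assms(2,3)
proof (induction q arbitrary: w)
  case Nil
  then show ?case by (simp add: pi_prod_def sum_eigen_part)
next
  case (Cons b q)
  let ?E = "eigen_part (\<lambda>x. ratio r x t) (kappa r)" and ?P = "\<lambda>k. pi_prod k (rix (q @ t)) (length t) (length (q @ t))"
  have "wt t \<le> wt (q @ t)" by (simp add: wt_def)
  show ?case
  proof (cases b)
    case (One i)
    then show ?thesis using Cons \<open>wt t \<le> wt (q @ t)\<close> pi_prod_Cons[of "length t" "q @ t" _ b]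
      by (simp add: ratio_Cons_One)
  next
    case Two
    define N where "N = real (wt (q @ t)) + 1"
    have "N > 0" by (simp add: N_def)
    have tl_w: "vertex r (tl w)" "wt (tl w) \<le> wt t"
      using Cons.prems by (cases w; auto simp: wt_def)+
    have "ratio r w (Two # q @ t) = ratio r w (q @ t) + (kappa r w * ratio r (tl w) (q @ t) - real (wt w) * ratio r w (q @ t)) / N"
      using ratio_Cons_Two[OF assms(1) Cons.prems(1)] by (simp add: N_def)
    also have "\<dots> = (\<Sum>k\<le>wt t. ?P k * ?E w k + (?P k * (kappa r w * ?E (tl w) k) - ?P k * (real (wt w) * ?E w k)) / N)"
      unfolding Cons.IH[OF Cons.prems] Cons.IH[OF tl_w] sum.distrib sum_divide_distrib[symmetric]
        sum_subtractf sum_distrib_left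
      by (simp add: algebra_simps)
    also have "\<dots> = (\<Sum>k\<le>wt t. ?P k * (1 - real k / N) * ?E w k)"
    proof (intro sum.cong refl)
      fix k
      have eig: "kappa r w * ?E (tl w) k = (real (wt w) - real k) * ?E w k"
        by (rule eigen_part_tl) simp
      show "?P k * ?E w k + (?P k * (kappa r w * ?E (tl w) k) - ?P k * (real (wt w) * ?E w k)) / N =
          ?P k * (1 - real k / N) * ?E w k"
        unfolding eig using \<open>N > 0\<close> by (simp add: field_simps)
    qed
    finally show ?thesis using Two pi_prod_Cons[of "length t" "q @ t" _ b] by (simp add: N_def)
  qed
qed

section \<open>Estimates for the eigenvalue products\<close>

lemma one_minus_power_approx:
  fixes x :: real
  assumes "0 \<le> x" and "x \<le> 1"
  shows "\<bar>(1 - x) ^ k - (1 - real k * x)\<bar> \<le> (real k * x)\<^sup>2"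
proof -
  have "(1 - x) ^ k \<le> 1 - real k * x + (real k * x)\<^sup>2"
  proof (induction k)
    case (Suc k)
    have "(1 - x) ^ Suc k \<le> (1 - x) * (1 - real k * x + (real k * x)\<^sup>2)"
      using mult_left_mono[OF Suc] assms by simp
    also have "\<dots> = 1 - real (Suc k) * x + (real (Suc k) * x)\<^sup>2 - ((real k + 1) * x\<^sup>2 + (real k)\<^sup>2 * x ^ 3)"
      by (simp add: algebra_simps power2_eq_square power3_eq_cube)
    also have "\<dots> \<le> 1 - real (Suc k) * x + (real (Suc k) * x)\<^sup>2"
      using assms by (simp only: diff_le_eq le_add_same_cancel1) simp
    finally show ?case .
  qed simp
  moreover have "1 - real k * x \<le> (1 - x) ^ k"
    using Bernoulli_inequality[of "- x" k] assms by simp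
  ultimately show ?thesis by (simp add: abs_le_iff)
qed

lemma sum_inverse_square_le: "1 \<le> N \<Longrightarrow> (\<Sum>j\<in>{N..<M}. 1 / (real j + 1)\<^sup>2) \<le> 1 / real N"
proof (cases "N \<le> M")
  case True
  assume "1 \<le> N"
  have "(\<Sum>j\<in>{N..<M}. 1 / (real j + 1)\<^sup>2) \<le> 1 / real N - 1 / real M"
    using True
  proof (induction M rule: dec_induct)
    case (step n)
    have n: "0 < real n" using step.hyps \<open>1 \<le> N\<close> by simp
    have "1 / (real n + 1)\<^sup>2 \<le> 1 / (real n * (real n + 1))"
      using n by (intro divide_left_mono) (auto simp: power2_eq_square)
    also have "\<dots> = 1 / real n - 1 / real (Suc n)"
      using n by (simp add: field_simps)
    finally have "1 / (real n + 1)\<^sup>2 \<le> 1 / real n - 1 / real (Suc n)" .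
    then show ?case using step.IH step.hyps by simp
  qed simp
  then show ?thesis by (smt (verit) divide_nonneg_nonneg of_nat_0_le_iff)
qed simp

lemma sum_digit_ge: "j \<le> (\<Sum>m<j. digit (a m))"
proof -
  have "digit l \<ge> 1" for l by (cases l) (simp_all add: digit_def)
  then show ?thesis using sum_mono[of "{..<j}" "\<lambda>_. 1" "\<lambda>m. digit (a m)"] by simp
qed

lemma pi_factor_bounds:
  assumes "k \<le> Suc j"
  shows "0 \<le> pi_factor k a j" "pi_factor k a j \<le> 1"
    "\<bar>pi_factor 1 a j ^ k - pi_factor k a j\<bar> \<le> (real k)\<^sup>2 / (real j + 1)\<^sup>2"
proof -
  define x where "x = 1 / (real (\<Sum>m<j. digit (a m)) + 1)"
  have G: "real j + 1 \<le> real (\<Sum>m<j. digit (a m)) + 1"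
    using sum_digit_ge[of j a] by linarith
  then have "0 < x" "x \<le> 1" "x \<le> 1 / (real j + 1)"
    by (auto simp: x_def field_simps)
  moreover have "real k * x \<le> 1" using assms G by (simp add: x_def field_simps)
  moreover have "pi_factor k a j = (if a j = Two then 1 - real k * x else 1)" for k
    by (simp add: pi_factor_def x_def)
  moreover have "(real k * x)\<^sup>2 \<le> (real k)\<^sup>2 * (1 / (real j + 1))\<^sup>2"
    unfolding power_mult_distrib using \<open>0 < x\<close> \<open>x \<le> 1 / (real j + 1)\<close>
    by (intro mult_left_mono power_mono) auto
  ultimately show "0 \<le> pi_factor k a j" "pi_factor k a j \<le> 1"
    "\<bar>pi_factor 1 a j ^ k - pi_factor k a j\<bar> \<le> (real k)\<^sup>2 / (real j + 1)\<^sup>2"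
    using one_minus_power_approx[of x k] by (auto simp: power_divide)
qed

lemma pi_prod_bounds:
  assumes "k \<le> lo"
  shows "0 \<le> pi_prod k a lo hi" "pi_prod k a lo hi \<le> 1"
  using pi_factor_bounds(1,2)[of k _ a] assms unfolding pi_prod_def
  by (auto intro!: prod_nonneg prod_le_1)

lemma pi_prod_approx_power:
  assumes "1 \<le> N" and "k \<le> N"
  shows "\<bar>pi_prod k a N M - pi_prod 1 a N M ^ k\<bar> \<le> (real k)\<^sup>2 / real N"
proof -
  have "\<bar>pi_prod k a N M - pi_prod 1 a N M ^ k\<bar> = norm ((\<Prod>j\<in>{N..<M}. pi_factor k a j) - (\<Prod>j\<in>{N..<M}. pi_factor 1 a j ^ k))"
    by (simp add: pi_prod_def prod_power_distrib)
  also have "\<dots> \<le> (\<Sum>j\<in>{N..<M}. norm (pi_factor k a j - pi_factor 1 a j ^ k))"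
    using pi_factor_bounds(1,2)[of k _ a] pi_factor_bounds(1,2)[of 1 _ a] assms
    by (intro norm_prod_diff) (auto simp: power_le_one)
  also have "\<dots> \<le> (\<Sum>j\<in>{N..<M}. (real k)\<^sup>2 * (1 / (real j + 1)\<^sup>2))"
    using pi_factor_bounds(3) assms by (intro sum_mono) (auto simp: abs_minus_commute)
  also have "\<dots> = (real k)\<^sup>2 * (\<Sum>j\<in>{N..<M}. 1 / (real j + 1)\<^sup>2)"
    by (simp only: sum_distrib_left)
  also have "\<dots> \<le> (real k)\<^sup>2 * (1 / real N)"
    by (intro mult_left_mono sum_inverse_square_le assms) simp
  finally show ?thesis by simp
qed

section \<open>Limits along letterwise convergent sequences\<close>

lemma tendsto_lim_of_approximants:
  fixes x A :: "nat \<Rightarrow> 'a::complete_space"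
  assumes "\<epsilon> \<longlonglongrightarrow> 0" and "\<forall>\<^sub>F N in sequentially. \<forall>\<^sub>F n in sequentially. dist (x n) (A N) \<le> \<epsilon> N"
  shows "x \<longlonglongrightarrow> lim A"
proof -
  have good: "\<forall>\<^sub>F N in sequentially. (\<forall>\<^sub>F n in sequentially. dist (x n) (A N) \<le> \<epsilon> N) \<and> \<epsilon> N < e"
    if "0 < e" for e
    using assms(2) order_tendstoD(2)[OF assms(1) that] by eventually_elim simp
  have "Cauchy A"
  proof (rule metric_CauchyI)
    fix e :: real assume "0 < e"
    then obtain N0 where N0: "\<And>N. N0 \<le> N \<Longrightarrow> (\<forall>\<^sub>F n in sequentially. dist (x n) (A N) \<le> \<epsilon> N) \<and> \<epsilon> N < e / 2"
      using good[of "e / 2"] by (auto simp: eventually_sequentially)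
    have "dist (A M) (A N) < e" if MN: "N0 \<le> M" "N0 \<le> N" for M N
    proof -
      obtain n where "dist (x n) (A M) \<le> \<epsilon> M" "dist (x n) (A N) \<le> \<epsilon> N"
        using eventually_happens'[OF _ eventually_conj[OF conjunct1[OF N0[OF MN(1)]] conjunct1[OF N0[OF MN(2)]]]]
        by auto
      then show ?thesis using N0[OF MN(1)] N0[OF MN(2)] dist_triangle3[of "A M" "A N" "x n"] by linarith
    qed
    then show "\<exists>N0. \<forall>M\<ge>N0. \<forall>N\<ge>N0. dist (A M) (A N) < e" by blast
  qed
  then have A: "A \<longlonglongrightarrow> lim A" by (simp add: Cauchy_convergent_iff convergent_LIMSEQ_iff)
  show ?thesis
  proof (rule tendstoI)
    fix e :: real assume "0 < e"
    obtain N where N: "\<forall>\<^sub>F n in sequentially. dist (x n) (A N) \<le> \<epsilon> N" "\<epsilon> N < e / 2" "dist (A N) (lim A) < e / 2"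
      using eventually_happens'[OF _ eventually_conj[OF good[of "e / 2"] tendstoD[OF A, of "e / 2"]]] \<open>0 < e\<close>
      by auto
    show "\<forall>\<^sub>F n in sequentially. dist (x n) (lim A) < e"
      using N(1)
    proof eventually_elim
      case (elim n)
      then show ?case using N(2,3) dist_triangle[of "x n" "lim A" "A N"] by linarith
    qed
  qed
qed

lemma pfac_cong: "(\<And>m. m \<le> j \<Longrightarrow> a m = b m) \<Longrightarrow> pfac a j = pfac b j"
  unfolding pfac_def gval_def by (metis (no_types, lifting) atMost_iff order_refl sum.cong)

lemma pfac_eq_pi_factor: "1 \<le> j \<Longrightarrow> pfac a j = pi_factor 1 a j"
proof (cases "a j = Two")
  case True
  assume "1 \<le> j"
  define S where "S = (\<Sum>m<j. digit (a m))"
  have "gval a j = S + 1"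
    using True by (simp add: gval_def S_def lessThan_Suc_atMost[symmetric] digit_def)
  moreover have "1 \<le> S" using sum_digit_ge[of j a] \<open>1 \<le> j\<close> by (simp add: S_def)
  ultimately show ?thesis using True by (simp add: pfac_def pi_factor_def S_def[symmetric] field_simps)
qed (simp add: pfac_def pi_factor_def)

lemma pfac_pos: "0 < pfac a j"
  by (simp add: pfac_def)

lemma pi_fin_eq_prod_pi_prod:
  assumes "1 \<le> N" and "N \<le> length x" and "\<And>i. i < N \<Longrightarrow> rix x i = v i"
  shows "pi_fin x = (\<Prod>j<N. pfac v j) * pi_prod 1 (rix x) N (length x)"
proof -
  have "pi_fin x = (\<Prod>j\<in>{0..<N}. pfac (rix x) j) * (\<Prod>j\<in>{N..<length x}. pfac (rix x) j)"
    unfolding pi_fin_def lessThan_atLeast0 using assms(2) by (simp add: prod.atLeastLessThan_concat)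
  also have "(\<Prod>j\<in>{0..<N}. pfac (rix x) j) = (\<Prod>j<N. pfac v j)"
    unfolding lessThan_atLeast0 using assms(3) by (intro prod.cong refl pfac_cong) auto
  also have "(\<Prod>j\<in>{N..<length x}. pfac (rix x) j) = pi_prod 1 (rix x) N (length x)"
    unfolding pi_prod_def using assms(1) by (intro prod.cong refl pfac_eq_pi_factor) auto
  finally show ?thesis .
qed

lemma letterwise_eventually_rix:
  assumes "letterwise vs v"
  shows "\<forall>\<^sub>F n in sequentially. N \<le> length (vs n) \<and> (\<forall>i<N. rix (vs n) i = v i)"
proof -
  have "\<forall>\<^sub>F n in sequentially. N \<le> length (vs n) \<and> (\<forall>i<N. rev (vs n) ! i = v i)"
    using assms unfolding letterwise_def by blast
  then show ?thesis by eventually_elim (auto simp: rix_def)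
qed

lemma pi_prod_1_tendsto:
  assumes "letterwise vs v" and "1 \<le> N" and "(\<lambda>n. pi_fin (vs n)) \<longlonglongrightarrow> c"
  shows "(\<lambda>n. pi_prod 1 (rix (vs n)) N (length (vs n))) \<longlonglongrightarrow> c / (\<Prod>j<N. pfac v j)"
proof -
  have nz: "(\<Prod>j<N. pfac v j) \<noteq> 0" using pfac_pos[of v] by (simp add: less_le)
  have "(\<lambda>n. pi_fin (vs n) / (\<Prod>j<N. pfac v j)) \<longlonglongrightarrow> c / (\<Prod>j<N. pfac v j)"
    by (intro tendsto_intros assms(3) nz)
  moreover have "\<forall>\<^sub>F n in sequentially. pi_fin (vs n) / (\<Prod>j<N. pfac v j) = pi_prod 1 (rix (vs n)) N (length (vs n))"
    using letterwise_eventually_rix[OF assms(1), of N]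
    by eventually_elim (use nz assms(2) pi_fin_eq_prod_pi_prod in auto)
  ultimately show ?thesis by (rule Lim_transform_eventually)
qed

text \<open>
  Cut at N \<ge> L: the head pi_prod k v L N is exact, and the tail is within k^2/N of the
  k-th power of pi_prod 1, whose limit c / (\<Prod>j<N. pfac v j) is forced by \<pi>.
\<close>
definition pi_prod_limit :: "nat \<Rightarrow> iword \<Rightarrow> real \<Rightarrow> nat \<Rightarrow> real" where
  "pi_prod_limit k v c L = lim (\<lambda>N. pi_prod k v L N * (c / (\<Prod>j<N. pfac v j)) ^ k)"

lemma pi_prod_tendsto:
  assumes lw: "letterwise vs v" and "k \<le> L" and pc: "(\<lambda>n. pi_fin (vs n)) \<longlonglongrightarrow> c"
  shows "(\<lambda>n. pi_prod k (rix (vs n)) L (length (vs n))) \<longlonglongrightarrow> pi_prod_limit k v c L"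
  unfolding pi_prod_limit_def
proof (rule tendsto_lim_of_approximants)
  let ?x = "\<lambda>n. pi_prod k (rix (vs n)) L (length (vs n))"
  let ?A = "\<lambda>N. pi_prod k v L N * (c / (\<Prod>j<N. pfac v j)) ^ k"
  show "(\<lambda>N. ((real k)\<^sup>2 + 1) / real N) \<longlonglongrightarrow> 0"
    by (rule lim_const_over_n)
  have "\<forall>\<^sub>F n in sequentially. dist (?x n) (?A N) \<le> ((real k)\<^sup>2 + 1) / real N" if N: "max 1 L \<le> N" for N
  proof -
    let ?y = "\<lambda>n. pi_prod 1 (rix (vs n)) N (length (vs n))"
    have P: "\<bar>pi_prod k v L N\<bar> \<le> 1" using pi_prod_bounds[OF assms(2)] by (simp add: abs_le_iff)
    have "(\<lambda>n. pi_prod k v L N * ?y n ^ k) \<longlonglongrightarrow> ?A N"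
      using pi_prod_1_tendsto[OF lw _ pc, of N] N by (intro tendsto_intros) auto
    then have "\<forall>\<^sub>F n in sequentially. dist (pi_prod k v L N * ?y n ^ k) (?A N) < 1 / real N"
      using N by (intro tendstoD) auto
    then show ?thesis using letterwise_eventually_rix[OF lw, of N]
    proof eventually_elim
      case (elim n)
      have "?x n = pi_prod k v L N * pi_prod k (rix (vs n)) N (length (vs n))"
        using pi_prod_split[of L N "length (vs n)" k "rix (vs n)"] pi_prod_cong[of N "rix (vs n)" v k L] elim N
        by auto
      then have "\<bar>?x n - pi_prod k v L N * ?y n ^ k\<bar> = \<bar>pi_prod k v L N\<bar> * \<bar>pi_prod k (rix (vs n)) N (length (vs n)) - ?y n ^ k\<bar>"
        by (simp add: abs_mult[symmetric] algebra_simps)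
      also have "\<dots> \<le> 1 * ((real k)\<^sup>2 / real N)"
        using P pi_prod_approx_power[of N k] N assms(2) by (intro mult_mono) auto
      finally show ?case using elim(1) dist_triangle[of "?x n" "?A N" "pi_prod k v L N * ?y n ^ k"]
        by (simp add: dist_real_def add_divide_distrib)
    qed
  qed
  then show "\<forall>\<^sub>F N in sequentially. \<forall>\<^sub>F n in sequentially. dist (?x n) (?A N) \<le> ((real k)\<^sup>2 + 1) / real N"
    by (rule eventually_sequentiallyI)
qed

lemma pi_prod_limit_0: "pi_prod_limit k v 0 L = 0 ^ k"
  by (cases k) (simp_all add: pi_prod_limit_def)

definition suffix_word :: "iword \<Rightarrow> nat \<Rightarrow> word" where
  "suffix_word v L = rev (map v [0..<L])"

lemma drop_eq_suffix_word:
  assumes "L \<le> length x" and "\<forall>i<L. rix x i = v i"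
  shows "drop (length x - L) x = suffix_word v L"
proof -
  have "take L (rev x) = map v [0..<L]"
    using assms by (intro nth_equalityI) (auto simp: rix_def)
  then show ?thesis using rev_take[of L "rev x"] by (simp add: suffix_word_def)
qed

lemma length_le_wt: "length x \<le> wt x"
proof (induction x)
  case (Cons a x)
  then show ?case by (cases a) auto
qed simp

lemma ratio_eq_sum_pi_prod:
  assumes "1 \<le> r" and "vertex r w" and "wt w < L" and "L \<le> length x" and "\<forall>i<L. rix x i = v i"
  shows "ratio r w x =
    (\<Sum>k\<le>wt w. pi_prod k (rix x) L (length x) * eigen_part (\<lambda>y. ratio r y (suffix_word v L)) (kappa r) w k)"
proof -
  let ?t = "suffix_word v L"
  obtain q where x: "x = q @ ?t"
    using drop_eq_suffix_word[OF assms(4,5)] by (metis append_take_drop_id)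
  have "wt w \<le> wt ?t" using assms(3) length_le_wt[of ?t] by (simp add: suffix_word_def)
  then have "ratio r w x =
      (\<Sum>k\<le>wt ?t. pi_prod k (rix x) L (length x) * eigen_part (\<lambda>y. ratio r y ?t) (kappa r) w k)"
    using ratio_append[OF assms(1,2), of ?t q] by (simp add: x suffix_word_def)
  also have "\<dots> = (\<Sum>k\<le>wt w. pi_prod k (rix x) L (length x) * eigen_part (\<lambda>y. ratio r y ?t) (kappa r) w k)"
    using \<open>wt w \<le> wt ?t\<close> by (intro sum.mono_neutral_right) (auto simp: eigen_part_eq_0)
  finally show ?thesis .
qed

definition ratio_limit :: "nat \<Rightarrow> iword \<Rightarrow> real \<Rightarrow> word \<Rightarrow> real" where
  "ratio_limit r v c w = (\<Sum>k\<le>wt w. pi_prod_limit k v c (Suc (wt w)) *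
      eigen_part (\<lambda>y. ratio r y (suffix_word v (Suc (wt w)))) (kappa r) w k)"

lemma ratio_tendsto_ratio_limit:
  assumes "1 \<le> r" and "vertex r w" and "letterwise vs v" and "(\<lambda>n. pi_fin (vs n)) \<longlonglongrightarrow> c"
  shows "(\<lambda>n. ratio r w (vs n)) \<longlonglongrightarrow> ratio_limit r v c w"
proof -
  let ?L = "Suc (wt w)"
  let ?E = "eigen_part (\<lambda>y. ratio r y (suffix_word v ?L)) (kappa r) w"
  have "(\<lambda>n. \<Sum>k\<le>wt w. pi_prod k (rix (vs n)) ?L (length (vs n)) * ?E k) \<longlonglongrightarrow> ratio_limit r v c w"
    unfolding ratio_limit_def using assms(3,4) by (intro tendsto_intros pi_prod_tendsto) auto
  moreover have "\<forall>\<^sub>F n in sequentially. (\<Sum>k\<le>wt w. pi_prod k (rix (vs n)) ?L (length (vs n)) * ?E k) = ratio r w (vs n)"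
    using letterwise_eventually_rix[OF assms(3), of ?L]
    by eventually_elim (auto intro: ratio_eq_sum_pi_prod[OF assms(1,2) lessI, symmetric])
  ultimately show ?thesis by (rule Lim_transform_eventually)
qed

lemma sfun_simps [simp]: "sfun [] = []" "sfun (One i # z) = One 1 # sfun z" "sfun (Two # z) = Two # sfun z"
  by (simp_all add: sfun_def)

lemma ones_simps [simp]: "ones [] = 0" "ones (One i # z) = Suc (ones z)" "ones (Two # z) = ones z"
  by (simp_all add: ones_def)

lemma wt_sfun [simp]: "wt (sfun z) = wt z"
proof (induction z)
  case (Cons a z)
  then show ?case by (cases a) auto
qed simp

lemma eigen_part_ratio_0:
  assumes "1 \<le> r"
  shows "eigen_part (\<lambda>y. ratio r y t) (kappa r) w 0 =
    real (dcount 1 [] (sfun w)) ^ 2 / (fact (wt w) * real r ^ ones w)"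
proof (rule eigen_part_0_eq)
  show "real (dcount 1 [] (sfun [])) ^ 2 / (fact (wt []) * real r ^ ones []) = ratio r [] t"
    using dcount_Nil_pos[OF assms, of t] by (simp add: ratio_def)
next
  fix w :: word assume "w \<noteq> []"
  then obtain a z where w: "w = a # z" by (cases w) auto
  have "0 < real r" using assms by simp
  show "real (wt w) * (real (dcount 1 [] (sfun w)) ^ 2 / (fact (wt w) * real r ^ ones w)) =
      kappa r w * (real (dcount 1 [] (sfun (tl w))) ^ 2 / (fact (wt (tl w)) * real r ^ ones (tl w)))"
  proof (cases a)
    case (One i)
    have "fact (wt w) * real r ^ ones w = real r * (real (wt w) * (fact (wt z) * real r ^ ones z))"
      using w One by simp
    moreover have "n * (D / (R * (n * F))) = 1 / R * (D / F)" if "0 < n" "0 < R" for n D R F :: real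
      using that by simp
    ultimately show ?thesis using w One \<open>0 < real r\<close> by (simp del: of_nat_Suc)
  next
    case Two
    define m where "m = real (wt z) + 1"
    have "fact (wt w) * real r ^ ones w = real (wt w) * m * (fact (wt (tl w)) * real r ^ ones (tl w))"
      and "real (dcount 1 [] (sfun w)) = m * real (dcount 1 [] (sfun (tl w)))"
      and "kappa r w = m"
      using w Two dcount_Nil_Cons_Two[of 1 "sfun z"] by (simp_all add: m_def algebra_simps)
    moreover have "n * ((m * D)\<^sup>2 / (n * m * F)) = m * (D\<^sup>2 / F)" if "0 < n" "0 < m" for n m D F :: real
      using that by (simp add: power2_eq_square)
    moreover have "0 < real (wt w)" "0 < m" using w Two by (simp_all add: m_def)
    ultimately show ?thesis by simp
  qed
qed

lemma ratio_limit_0: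
  assumes "1 \<le> r"
  shows "ratio_limit r v 0 w = real (dcount 1 [] (sfun w)) ^ 2 / (fact (wt w) * real r ^ ones w)"
  by (simp add: ratio_limit_def pi_prod_limit_0 sum.atMost_shift eigen_part_ratio_0[OF assms])

theorem mainTheorem1:
  fixes r :: nat
  assumes "1 \<le> r"
  shows "(\<forall>(vs :: nat \<Rightarrow> word) vs' (v :: iword) (\<beta> :: real).
            (\<forall>n. vertex r (vs n)) \<and> (\<forall>n. vertex r (vs' n)) \<and>
            ivertex r v \<and> pi_inf v > 0 \<and> 0 < \<beta> \<and> \<beta> \<le> 1 \<and>
            letterwise vs v \<and> letterwise vs' v \<and>
            (\<lambda>n. pi_fin (vs n)) \<longlonglongrightarrow> \<beta> * pi_inf v \<and>
            (\<lambda>n. pi_fin (vs' n)) \<longlonglongrightarrow> \<beta> * pi_inf v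
          \<longrightarrow> (\<forall>w. vertex r w \<longrightarrow>
                (\<exists>L. (\<lambda>n. ratio r w (vs n)) \<longlonglongrightarrow> L \<and>
                     (\<lambda>n. ratio r w (vs' n)) \<longlonglongrightarrow> L)))
       \<and> (\<forall>(vs :: nat \<Rightarrow> word) (v :: iword).
            (\<forall>n. vertex r (vs n)) \<and> ivertex r v \<and> letterwise vs v \<and>
            (\<lambda>n. pi_fin (vs n)) \<longlonglongrightarrow> 0
          \<longrightarrow> (\<forall>w. vertex r w \<longrightarrow>
                (\<lambda>n. ratio r w (vs n)) \<longlonglongrightarrow>
                  real (dcount 1 [] (sfun w)) ^ 2 / (fact (wt w) * real r ^ ones w)))"
proof (intro conjI allI impI; elim conjE)
  fix vs vs' :: "nat \<Rightarrow> word" and v :: iword and \<beta> :: real and w :: word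
  assume "letterwise vs v" "letterwise vs' v" "vertex r w"
    and "(\<lambda>n. pi_fin (vs n)) \<longlonglongrightarrow> \<beta> * pi_inf v" "(\<lambda>n. pi_fin (vs' n)) \<longlonglongrightarrow> \<beta> * pi_inf v"
  then show "\<exists>L. (\<lambda>n. ratio r w (vs n)) \<longlonglongrightarrow> L \<and> (\<lambda>n. ratio r w (vs' n)) \<longlonglongrightarrow> L"
    using ratio_tendsto_ratio_limit[OF assms] by blast
next
  fix vs :: "nat \<Rightarrow> word" and v :: iword and w :: word
  assume "letterwise vs v" "vertex r w" "(\<lambda>n. pi_fin (vs n)) \<longlonglongrightarrow> 0"
  then show "(\<lambda>n. ratio r w (vs n)) \<longlonglongrightarrow> real (dcount 1 [] (sfun w)) ^ 2 / (fact (wt w) * real r ^ ones w)"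
    using ratio_tendsto_ratio_limit[OF assms] ratio_limit_0[OF assms] by metis
qed

end
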